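(* Let $f:\mathbb{R}^n\to\mathbb{R}$ be convex, with the constants $L_{i,j}$ and $L_j$ as in the context. Then for any $j\in\{1,\dots,n\}$ and all $x',x''\in\mathcal F$, \[ \bigl\|[\nabla f(x')-\nabla_j f(x')e]-[\nabla f(x'')-\nabla_j f(x'')e]\bigr\|_{\langle j\rangle} \le L_j\,\|x'-x''\|_{\langle j\rangle}. \]
   Context: $n\ge2$; $\mathcal F=\{x\in\mathbb{R}^n: e^Tx=b,\ l_i\le x_i\le u_i\}$ with $e$ the all-ones vector, $b\in\mathbb{R}$, $l_i\in\mathbb{R}\cup\{-\infty\}$, $u_i\in\mathbb{R}\cup\{+\infty\}$, $l_i<u_i$. $f$ is continuously differentiable with Lipschitz continuous gradient on $\mathbb{R}^n$. For $i\ne j$, $L_{i,j}>0$ are constants such that for every $x\in\mathbb{R}^n$ and $s,t\in\mathbb{R}$, $|\nabla f(x+s(e_i-e_j))^T(e_i-e_j)-\nabla f(x+t(e_i-e_j))^T(e_i-e_j)|\le L_{i,j}|s-t|$ ($e_i$ the $i$th unit vector); $L_{i,i}=0$. $L_j=\sum_{i=1}^nL_{i,j}$. For $j$ fixed, $\langle x,y\rangle_j=\sum_{i\ne j}x_iy_i$ and $\|x\|_{\langle j\rangle}=\sqrt{\langle x,x\rangle_j}$. *)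

theory Defs
  imports "HOL-Analysis.Analysis" "HOL-Library.Extended_Real"
begin

definition ones :: "real ^ 'n" where
  "ones = (\<chi> i. 1)"

definition feasible :: "real \<Rightarrow> ('n \<Rightarrow> ereal) \<Rightarrow> ('n \<Rightarrow> ereal) \<Rightarrow> (real ^ 'n) set" where
  "feasible b l u = {x. ones \<bullet> x = b \<and> (\<forall>i. l i \<le> ereal (x $ i) \<and> ereal (x $ i) \<le> u i)}"

definition inner_j :: "'n::finite \<Rightarrow> real ^ 'n \<Rightarrow> real ^ 'n \<Rightarrow> real" where
  "inner_j j x y = (\<Sum>i\<in>UNIV - {j}. x $ i * y $ i)"

definition norm_j :: "'n::finite \<Rightarrow> real ^ 'n \<Rightarrow> real" where
  "norm_j j x = sqrt (inner_j j x x)"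

end

theory Submission
  imports Defs
begin

(* Along each direction e_i - e_j the derivative of f is L_ij-Lipschitz, which bounds f from above
   by a quadratic on every such line. Writing a step h with e^T h = 0 as a combination of the
   directions e_i - e_j (i ~= j) and averaging the line bounds by convexity with weights L_ij / L_j
   gives a descent lemma on the hyperplane e^T h = 0 with constant L_j in the seminorm ||.||_<j>.
   On that hyperplane the gradient acts only through r(x) = grad f(x) - grad_j f(x) e, whose j-th
   coordinate vanishes. The descent lemma and the tangent-plane inequality of the convex f yield,
   as in the classical proof of cocoercivity, ||r(x') - r(x'')||^2 <= L_j <r(x') - r(x''), x' - x''>_j,
   and Cauchy-Schwarz concludes. *)

lemma convex_on_line:
  fixes f :: "'a::real_vector \<Rightarrow> real"
  assumes "convex_on UNIV f"
  shows "convex_on UNIV (\<lambda>t. f (x + t *\<^sub>R d))"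
proof (rule convex_onI)
  fix u s t :: real assume u: "0 < u" "u < 1"
  have "x + ((1 - u) * s + u * t) *\<^sub>R d = (1 - u) *\<^sub>R (x + s *\<^sub>R d) + u *\<^sub>R (x + t *\<^sub>R d)"
    by (simp add: algebra_simps)
  then show "f (x + ((1 - u) *\<^sub>R s + u *\<^sub>R t) *\<^sub>R d) \<le> (1 - u) * f (x + s *\<^sub>R d) + u * f (x + t *\<^sub>R d)"
    using convex_onD[OF assms, of u "x + s *\<^sub>R d" "x + t *\<^sub>R d"] u by simp
qed simp

lemma has_real_derivative_line:
  fixes f :: "'a::real_inner \<Rightarrow> real"
  assumes grad: "\<And>x. (f has_derivative (\<lambda>h. g x \<bullet> h)) (at x)"
  shows "((\<lambda>t. f (x + t *\<^sub>R d)) has_real_derivative g (x + t *\<^sub>R d) \<bullet> d) (at t)"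
proof -
  have "((\<lambda>t. x + t *\<^sub>R d) has_derivative (\<lambda>s. s *\<^sub>R d)) (at t)"
    by (auto intro!: derivative_eq_intros)
  from has_derivative_compose[OF this grad]
  show ?thesis
    by (simp add: o_def has_field_derivative_def mult_commute_abs)
qed

lemma convex_on_imp_above_tangent_plane:
  fixes f :: "'a::real_inner \<Rightarrow> real"
  assumes grad: "\<And>x. (f has_derivative (\<lambda>h. g x \<bullet> h)) (at x)"
    and cvx: "convex_on UNIV f"
  shows "f x + g x \<bullet> (z - x) \<le> f z"
proof -
  have "g x \<bullet> (z - x) * (1 - 0) \<le> f (x + 1 *\<^sub>R (z - x)) - f (x + 0 *\<^sub>R (z - x))"
    by (rule convex_on_imp_above_tangent[OF convex_on_line[OF cvx]])
      (use has_real_derivative_line[OF grad, of x "z - x" 0] in auto)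
  then show ?thesis by simp
qed

lemma descent_lemma_line:
  fixes f :: "'a::real_inner \<Rightarrow> real"
  assumes grad: "\<And>x. (f has_derivative (\<lambda>h. g x \<bullet> h)) (at x)"
    and lip: "\<And>s t. \<bar>g (x + s *\<^sub>R d) \<bullet> d - g (x + t *\<^sub>R d) \<bullet> d\<bar> \<le> K * \<bar>s - t\<bar>"
  shows "f (x + t *\<^sub>R d) \<le> f x + t * (g x \<bullet> d) + K / 2 * t\<^sup>2"
proof -
  define \<phi> where "\<phi> t = f (x + t *\<^sub>R d) - f x - t * (g x \<bullet> d) - K / 2 * t\<^sup>2" for t
  define \<phi>' where "\<phi>' s = g (x + s *\<^sub>R d) \<bullet> d - g x \<bullet> d - K * s" for s
  have deriv: "(\<phi> has_real_derivative \<phi>' s) (at s)" for s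
    unfolding \<phi>_def \<phi>'_def
    by (auto intro!: derivative_eq_intros has_real_derivative_line[OF grad] simp: power2_eq_square)
  have sign: "0 \<le> s \<Longrightarrow> \<phi>' s \<le> 0" "s \<le> 0 \<Longrightarrow> 0 \<le> \<phi>' s" for s
    using lip[of s 0] by (auto simp: \<phi>'_def abs_le_iff)
  have "\<phi> t \<le> \<phi> 0"
  proof (cases "0 \<le> t")
    case True
    show ?thesis
      by (rule DERIV_nonpos_imp_nonincreasing[OF True]) (use deriv sign(1) in blast)
  next
    case False
    then have "t \<le> 0" by simp
    show ?thesis
      by (rule DERIV_nonneg_imp_nondecreasing[OF \<open>t \<le> 0\<close>]) (use deriv sign(2) in blast)
  qed
  then show ?thesis by (simp add: \<phi>_def)
qed

lemma convex_on_quadratic_bounds_sum: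
  fixes f :: "'a::real_vector \<Rightarrow> real"
  assumes cvx: "convex_on UNIV f" and I: "finite I"
    and Lpos: "\<And>i. i \<in> I \<Longrightarrow> L i > 0"
    and bound: "\<And>i t. i \<in> I \<Longrightarrow> f (x + t *\<^sub>R d i) \<le> f x + t * D i + L i / 2 * t\<^sup>2"
  shows "f (x + (\<Sum>i\<in>I. c i *\<^sub>R d i))
           \<le> f x + (\<Sum>i\<in>I. c i * D i) + (\<Sum>i\<in>I. L i) / 2 * (\<Sum>i\<in>I. (c i)\<^sup>2)"
proof (cases "I = {}")
  case False
  define M where "M = (\<Sum>i\<in>I. L i)"
  \<comment> \<open>Jensen with weights proportional to \<open>L i\<close> makes every quadratic term carry the same factor \<open>M\<close>\<close>
  define p where "p i = L i / M" for i
  define y where "y i = x + (c i / p i) *\<^sub>R d i" for i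
  have "M > 0" unfolding M_def using I False Lpos by (intro sum_pos) auto
  then have p: "i \<in> I \<Longrightarrow> p i > 0" for i using Lpos by (simp add: p_def)
  have psum: "(\<Sum>i\<in>I. p i) = 1"
    using \<open>M > 0\<close> by (simp add: p_def M_def flip: sum_divide_distrib)
  have "(\<Sum>i\<in>I. p i *\<^sub>R y i) = (\<Sum>i\<in>I. p i *\<^sub>R x + c i *\<^sub>R d i)"
  proof (rule sum.cong)
    fix i assume "i \<in> I"
    with p have "p i \<noteq> 0" by force
    then show "p i *\<^sub>R y i = p i *\<^sub>R x + c i *\<^sub>R d i"
      by (simp add: y_def scaleR_add_right)
  qed simp
  also have "\<dots> = (\<Sum>i\<in>I. p i) *\<^sub>R x + (\<Sum>i\<in>I. c i *\<^sub>R d i)"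
    by (simp add: sum.distrib scaleR_sum_left)
  finally have "f (x + (\<Sum>i\<in>I. c i *\<^sub>R d i)) = f (\<Sum>i\<in>I. p i *\<^sub>R y i)"
    by (simp add: psum)
  also have "\<dots> \<le> (\<Sum>i\<in>I. p i * f (y i))"
    using p psum I False by (intro convex_on_sum[OF _ _ cvx]) (auto simp: less_imp_le)
  also have "\<dots> \<le> (\<Sum>i\<in>I. p i * f x + c i * D i + M / 2 * (c i)\<^sup>2)"
  proof (rule sum_mono)
    fix i assume i: "i \<in> I"
    have "p i * f (y i) \<le> p i * (f x + (c i / p i) * D i + L i / 2 * (c i / p i)\<^sup>2)"
      using bound[OF i, of "c i / p i"] p[OF i] unfolding y_def by (intro mult_left_mono) auto
    also have "\<dots> = p i * f x + c i * D i + M / 2 * (c i)\<^sup>2"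
      using p[OF i] Lpos[OF i] \<open>M > 0\<close> by (simp add: p_def field_simps power2_eq_square)
    finally show "p i * f (y i) \<le> p i * f x + c i * D i + M / 2 * (c i)\<^sup>2" .
  qed
  also have "\<dots> = f x + (\<Sum>i\<in>I. c i * D i) + M / 2 * (\<Sum>i\<in>I. (c i)\<^sup>2)"
    by (simp add: sum.distrib psum sum_distrib_left flip: sum_distrib_right)
  finally show ?thesis by (simp add: M_def)
qed simp

definition reduced_vec :: "'n::finite \<Rightarrow> real ^ 'n \<Rightarrow> real ^ 'n" where
  "reduced_vec j g = g - (g $ j) *\<^sub>R ones"

lemma ones_inner: "ones \<bullet> x = (\<Sum>i\<in>UNIV. x $ i)"
  by (simp add: ones_def inner_vec_def)

lemma ones_inner_axis [simp]: "ones \<bullet> axis i c = c"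
  by (simp add: inner_axis ones_def)

lemma reduced_vec_nth [simp]: "reduced_vec j g $ k = g $ k - g $ j"
  by (simp add: reduced_vec_def ones_def)

lemma reduced_vec_diff: "reduced_vec j (g - g') = reduced_vec j g - reduced_vec j g'"
  by (simp add: vec_eq_iff)

lemma inner_reduced_vec:
  assumes "ones \<bullet> h = 0"
  shows "g \<bullet> h = reduced_vec j g \<bullet> h"
  using assms by (simp add: reduced_vec_def inner_diff_left)

lemma inner_vec_eq_inner_j:
  assumes "x $ j = 0"
  shows "x \<bullet> y = inner_j j x y"
  using assms sum.remove[of UNIV j "\<lambda>i. x $ i * y $ i"]
  by (simp add: inner_vec_def inner_j_def)

lemma norm_j_eq_norm:
  assumes "x $ j = 0"
  shows "norm_j j x = norm x"
  using inner_vec_eq_inner_j[OF assms, of x] by (simp add: norm_j_def norm_eq_sqrt_inner)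

lemma norm_j_cong:
  assumes "\<And>k. k \<noteq> j \<Longrightarrow> x $ k = y $ k"
  shows "norm_j j x = norm_j j y"
  unfolding norm_j_def inner_j_def using assms by (intro arg_cong[where f = sqrt] sum.cong) auto

lemma norm_j_nonneg: "0 \<le> norm_j j x"
  by (simp add: norm_j_def inner_j_def sum_nonneg)

lemma norm_j_scaleR: "norm_j j (c *\<^sub>R x) = \<bar>c\<bar> * norm_j j x"
proof -
  have "inner_j j (c *\<^sub>R x) (c *\<^sub>R x) = c\<^sup>2 * inner_j j x x"
    by (simp add: inner_j_def sum_distrib_left power2_eq_square algebra_simps)
  then show ?thesis by (simp add: norm_j_def real_sqrt_mult)
qed

lemma power2_norm_j: "(norm_j j x)\<^sup>2 = (\<Sum>i\<in>UNIV - {j}. (x $ i)\<^sup>2)"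
  by (simp add: norm_j_def inner_j_def sum_nonneg power2_eq_square)

lemma inner_j_le_norm_j: "inner_j j x y \<le> norm_j j x * norm_j j y"
proof -
  have "(inner_j j x y)\<^sup>2 \<le> (norm_j j x)\<^sup>2 * (norm_j j y)\<^sup>2"
    unfolding inner_j_def power2_norm_j by (rule Cauchy_Schwarz_ineq_sum)
  then have "\<bar>inner_j j x y\<bar>\<^sup>2 \<le> (norm_j j x * norm_j j y)\<^sup>2"
    by (simp add: power_mult_distrib)
  then have "\<bar>inner_j j x y\<bar> \<le> norm_j j x * norm_j j y"
    by (rule power2_le_imp_le) (simp add: norm_j_nonneg)
  then show ?thesis by simp
qed

lemma hyperplane_eq_sum_axis_diff:
  fixes h :: "real ^ 'n"
  assumes "ones \<bullet> h = 0"
  shows "h = (\<Sum>i\<in>UNIV - {j}. h $ i *\<^sub>R (axis i 1 - axis j 1))"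
proof -
  have hj: "h $ j = - (\<Sum>i\<in>UNIV - {j}. h $ i)"
    using assms sum.remove[of UNIV j "\<lambda>i. h $ i"] by (simp add: ones_inner)
  have "h = (\<Sum>i\<in>UNIV. h $ i *\<^sub>R axis i 1)"
    using basis_expansion[of h] by (simp add: scalar_mult_eq_scaleR)
  also have "\<dots> = h $ j *\<^sub>R axis j 1 + (\<Sum>i\<in>UNIV - {j}. h $ i *\<^sub>R axis i 1)"
    by (simp add: sum.remove)
  also have "\<dots> = (\<Sum>i\<in>UNIV - {j}. h $ i *\<^sub>R (axis i 1 - axis j 1))"
    by (simp add: hj scaleR_diff_right sum_subtractf scaleR_sum_left)
  finally show ?thesis .
qed

lemma descent_lemma_hyperplane:
  fixes f :: "real ^ 'n \<Rightarrow> real"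
  assumes cvx: "convex_on UNIV f"
    and Lpos: "\<And>i. i \<noteq> j \<Longrightarrow> L i > 0"
    and bound: "\<And>i t. i \<noteq> j \<Longrightarrow>
      f (x + t *\<^sub>R (axis i 1 - axis j 1)) \<le> f x + t * (g \<bullet> (axis i 1 - axis j 1)) + L i / 2 * t\<^sup>2"
    and h: "ones \<bullet> h = 0"
  shows "f (x + h) \<le> f x + g \<bullet> h + (\<Sum>i\<in>UNIV - {j}. L i) / 2 * (norm_j j h)\<^sup>2"
proof -
  have "f (x + (\<Sum>i\<in>UNIV - {j}. h $ i *\<^sub>R (axis i 1 - axis j 1)))
      \<le> f x + (\<Sum>i\<in>UNIV - {j}. h $ i * (g \<bullet> (axis i 1 - axis j 1)))
          + (\<Sum>i\<in>UNIV - {j}. L i) / 2 * (\<Sum>i\<in>UNIV - {j}. (h $ i)\<^sup>2)"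
    using Lpos bound by (intro convex_on_quadratic_bounds_sum[OF cvx]) auto
  also have "(\<Sum>i\<in>UNIV - {j}. h $ i * (g \<bullet> (axis i 1 - axis j 1)))
      = g \<bullet> (\<Sum>i\<in>UNIV - {j}. h $ i *\<^sub>R (axis i 1 - axis j 1))"
    by (simp add: inner_sum_right)
  finally show ?thesis
    by (simp flip: hyperplane_eq_sum_axis_diff[OF h] add: power2_norm_j)
qed

lemma reduced_gradient_cocoercive:
  fixes f :: "real ^ 'n \<Rightarrow> real"
  assumes grad: "\<And>x. (f has_derivative (\<lambda>h. g x \<bullet> h)) (at x)"
    and cvx: "convex_on UNIV f" and "M > 0"
    and descent: "\<And>x h. ones \<bullet> h = 0 \<Longrightarrow> f (x + h) \<le> f x + g x \<bullet> h + M / 2 * (norm_j j h)\<^sup>2"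
  shows "f x + g x \<bullet> (y - x) + (norm (reduced_vec j (g y - g x)))\<^sup>2 / (2 * M) \<le> f y"
proof -
  define r where "r = reduced_vec j (g y - g x)"
  \<comment> \<open>step against \<open>r\<close>, corrected in coordinate \<open>j\<close> only so as to stay in the hyperplane\<close>
  define w where "w = r - (ones \<bullet> r) *\<^sub>R axis j 1"
  define h where "h = - (1 / M) *\<^sub>R w"
  have "r $ j = 0" by (simp add: r_def)
  have "ones \<bullet> h = 0" by (simp add: h_def w_def inner_diff_right)
  have "norm_j j w = norm r"
    using norm_j_cong[of j w r] norm_j_eq_norm[OF \<open>r $ j = 0\<close>] by (simp add: w_def axis_def)
  then have norm_h: "norm_j j h = norm r / M"
    using norm_j_scaleR[of j "- (1 / M)" w] \<open>M > 0\<close> by (simp add: h_def)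
  have "(g y - g x) \<bullet> h = r \<bullet> h"
    unfolding r_def by (rule inner_reduced_vec[OF \<open>ones \<bullet> h = 0\<close>])
  also have "\<dots> = - (norm r)\<^sup>2 / M"
    using \<open>r $ j = 0\<close> by (simp add: h_def w_def inner_diff_right inner_axis power2_norm_eq_inner)
  finally have inner_h: "g y \<bullet> h - g x \<bullet> h = - (norm r)\<^sup>2 / M"
    by (simp add: inner_diff_left)
  have "f x + g x \<bullet> (y + h - x) \<le> f (y + h)"
    by (rule convex_on_imp_above_tangent_plane[OF grad cvx])
  also have "\<dots> \<le> f y + g y \<bullet> h + (norm r)\<^sup>2 / (2 * M)"
    using descent[OF \<open>ones \<bullet> h = 0\<close>, of y] \<open>M > 0\<close> norm_h
    by (simp add: power_divide power2_eq_square)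
  moreover have "g x \<bullet> (y + h - x) = g x \<bullet> (y - x) + g x \<bullet> h"
    by (simp add: inner_add_right inner_diff_right)
  ultimately have "f x + g x \<bullet> (y - x) + (norm r)\<^sup>2 / M \<le> f y + (norm r)\<^sup>2 / (2 * M)"
    using inner_h by linarith
  moreover have "(norm r)\<^sup>2 / M = (norm r)\<^sup>2 / (2 * M) + (norm r)\<^sup>2 / (2 * M)"
    by (simp add: field_simps)
  ultimately show ?thesis by (simp add: r_def)
qed

lemma reduced_gradient_lipschitz:
  fixes f :: "real ^ 'n \<Rightarrow> real"
  assumes grad: "\<And>x. (f has_derivative (\<lambda>h. g x \<bullet> h)) (at x)"
    and cvx: "convex_on UNIV f" and "M > 0"
    and descent: "\<And>x h. ones \<bullet> h = 0 \<Longrightarrow> f (x + h) \<le> f x + g x \<bullet> h + M / 2 * (norm_j j h)\<^sup>2"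
    and xy: "ones \<bullet> (x - y) = 0"
  shows "norm_j j (reduced_vec j (g x) - reduced_vec j (g y)) \<le> M * norm_j j (x - y)"
proof -
  define r where "r = reduced_vec j (g x - g y)"
  have "r $ j = 0" by (simp add: r_def)
  have "norm (reduced_vec j (g y - g x)) = norm r"
    by (simp add: r_def reduced_vec_diff norm_minus_commute)
  then have "(norm r)\<^sup>2 / M \<le> (g x - g y) \<bullet> (x - y)"
    using reduced_gradient_cocoercive[OF grad cvx \<open>M > 0\<close> descent, of x y]
      reduced_gradient_cocoercive[OF grad cvx \<open>M > 0\<close> descent, of y x]
    by (simp add: r_def inner_diff_left inner_diff_right field_simps)
  also have "\<dots> = inner_j j r (x - y)"
    using inner_reduced_vec[OF xy, of "g x - g y" j] inner_vec_eq_inner_j[OF \<open>r $ j = 0\<close>]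
    by (simp add: r_def)
  also have "\<dots> \<le> norm r * norm_j j (x - y)"
    using inner_j_le_norm_j[of j r "x - y"] by (simp add: norm_j_eq_norm[OF \<open>r $ j = 0\<close>])
  finally have "norm r * norm r \<le> norm r * (M * norm_j j (x - y))"
    using \<open>M > 0\<close> by (simp add: power2_eq_square field_simps)
  then have "norm r \<le> M * norm_j j (x - y)"
    using \<open>M > 0\<close> norm_j_nonneg[of j "x - y"] by (cases "norm r = 0") auto
  then show ?thesis
    by (simp add: r_def reduced_vec_diff norm_j_eq_norm)
qed

theorem lemma3:
  fixes f :: "real ^ 'n \<Rightarrow> real"
    and gradf :: "real ^ 'n \<Rightarrow> real ^ 'n"
    and L :: "'n \<Rightarrow> 'n \<Rightarrow> real"
    and b :: real and l u :: "'n \<Rightarrow> ereal"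
  assumes n2: "CARD('n) \<ge> 2"
    and lu: "\<And>i. l i < u i" "\<And>i. l i \<noteq> \<infinity>" "\<And>i. u i \<noteq> -\<infinity>"
    and grad: "\<And>x. (f has_derivative (\<lambda>h. gradf x \<bullet> h)) (at x)"
    and lip: "\<exists>K. \<forall>x y. norm (gradf x - gradf y) \<le> K * norm (x - y)"
    and Lpos: "\<And>i j. i \<noteq> j \<Longrightarrow> L i j > 0"
    and Ldiag: "\<And>i. L i i = 0"
    and Lij: "\<And>i j x s t. i \<noteq> j \<Longrightarrow>
        \<bar>gradf (x + s *\<^sub>R (axis i 1 - axis j 1)) \<bullet> (axis i 1 - axis j 1)
         - gradf (x + t *\<^sub>R (axis i 1 - axis j 1)) \<bullet> (axis i 1 - axis j 1)\<bar>
        \<le> L i j * \<bar>s - t\<bar>"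
    and cvx: "convex_on UNIV f"
    and x1: "x' \<in> feasible b l u" and x2: "x'' \<in> feasible b l u"
  shows "norm_j j ((gradf x' - (gradf x' $ j) *\<^sub>R ones) - (gradf x'' - (gradf x'' $ j) *\<^sub>R ones))
           \<le> (\<Sum>i\<in>UNIV. L i j) * norm_j j (x' - x'')"
proof -
  define M where "M = (\<Sum>i\<in>UNIV - {j}. L i j)"
  have "(\<Sum>i\<in>UNIV. L i j) = M"
    using sum.remove[of UNIV j "\<lambda>i. L i j"] Ldiag by (simp add: M_def)
  have "UNIV - {j} \<noteq> {}"
  proof
    assume "UNIV - {j} = {}"
    then have "CARD('n) \<le> card {j}" by (intro card_mono) auto
    with n2 show False by simp
  qed
  then have "M > 0"
    unfolding M_def using Lpos by (intro sum_pos) auto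
  have descent: "f (x + h) \<le> f x + gradf x \<bullet> h + M / 2 * (norm_j j h)\<^sup>2" if "ones \<bullet> h = 0" for x h
    unfolding M_def
    by (rule descent_lemma_hyperplane[OF cvx _ _ that])
      (use Lpos descent_lemma_line[OF grad Lij] in auto)
  have "ones \<bullet> (x' - x'') = 0"
    using x1 x2 by (simp add: feasible_def inner_diff_right)
  from reduced_gradient_lipschitz[OF grad cvx \<open>M > 0\<close> descent this]
  show ?thesis
    using \<open>(\<Sum>i\<in>UNIV. L i j) = M\<close> by (simp add: reduced_vec_def)
qed

end
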